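(* Let $k$ be a positive integer and let $G$ be a graph on $m\ge NPO(k)$ vertices. Let $d_1\ge d_2\ge\cdots\ge d_m$ be the vertex degrees of $G$ and $\lambda_1\ge\lambda_2\ge\cdots\ge\lambda_m$ the eigenvalues of the Laplacian matrix $L(G)$. Then $\lambda_k\ge d_{NPO(k)}$.
   Context: All graphs are finite, simple, unweighted and undirected; $A(G)$ denotes the adjacency matrix and $L(G)=D(G)-A(G)$ the Laplacian matrix, where $D(G)$ is the diagonal matrix of vertex degrees. Eigenvalues are counted with multiplicity. For a positive integer $k$, $NPO(k)$ is the smallest integer $n$ such that the adjacency matrix of every graph with at least $n$ vertices has at least $k$ nonpositive eigenvalues. *)

theory Defs
  imports "Jordan_Normal_Form.Char_Poly" "HOL-Library.Multiset"
begin

text \<open>A finite simple graph on the vertex set {0..<n}, given by a symmetric,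
  irreflexive adjacency relation E (only its restriction to {0..<n} matters).\<close>
definition simple_graph :: "nat \<Rightarrow> (nat \<Rightarrow> nat \<Rightarrow> bool) \<Rightarrow> bool" where
  "simple_graph n E \<longleftrightarrow> (\<forall>i<n. \<forall>j<n. E i j \<longleftrightarrow> E j i) \<and> (\<forall>i<n. \<not> E i i)"

definition adj_matrix :: "nat \<Rightarrow> (nat \<Rightarrow> nat \<Rightarrow> bool) \<Rightarrow> real mat" where
  "adj_matrix n E = mat n n (\<lambda>(i,j). if E i j then 1 else 0)"

definition degree :: "nat \<Rightarrow> (nat \<Rightarrow> nat \<Rightarrow> bool) \<Rightarrow> nat \<Rightarrow> nat" where
  "degree n E i = card {j. j < n \<and> E i j}"

definition deg_matrix :: "nat \<Rightarrow> (nat \<Rightarrow> nat \<Rightarrow> bool) \<Rightarrow> real mat" where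
  "deg_matrix n E = mat n n (\<lambda>(i,j). if i = j then real (degree n E i) else 0)"

definition laplacian :: "nat \<Rightarrow> (nat \<Rightarrow> nat \<Rightarrow> bool) \<Rightarrow> real mat" where
  "laplacian n E = deg_matrix n E - adj_matrix n E"

text \<open>For the real symmetric matrices considered here, all
  eigenvalues are real, so this is the full spectrum.\<close>
definition eigenvalues_mset :: "real mat \<Rightarrow> real multiset" where
  "eigenvalues_mset A = proots (char_poly A)"

text \<open>Eigenvalues in non-increasing order: entry i (0-based) is lambda_(i+1).\<close>
definition eigs_desc :: "real mat \<Rightarrow> real list" where
  "eigs_desc A = rev (sorted_list_of_multiset (eigenvalues_mset A))"

text \<open>Degrees in non-increasing order: entry i (0-based) is d_(i+1).\<close>
definition degs_desc :: "nat \<Rightarrow> (nat \<Rightarrow> nat \<Rightarrow> bool) \<Rightarrow> nat list" where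
  "degs_desc n E = rev (sort (map (degree n E) [0..<n]))"

definition num_nonpos_eigs :: "real mat \<Rightarrow> nat" where
  "num_nonpos_eigs A = size (filter_mset (\<lambda>x. x \<le> 0) (eigenvalues_mset A))"

definition NPO :: "nat \<Rightarrow> nat" where
  "NPO k = (LEAST n. \<forall>m E. n \<le> m \<longrightarrow> simple_graph m E \<longrightarrow>
                          k \<le> num_nonpos_eigs (adj_matrix m E))"

end

theory Submission
  imports Defs "Jordan_Normal_Form.Schur_Decomposition" "HOL-Library.Ramsey"
begin

(* Put N = NPO(k) and let d be the N-th largest degree. Choose N vertices of
   degree at least d. By definition of NPO(k), the subgraph H they induce has k nonpositive
   adjacency eigenvalues, so there is a k-dimensional space of vectors w (indexed by V(H))
   with w^T A(H) w <= 0. Extending such w by zero to all of V(G) gives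
   x^T L(G) x = sum_{v in H} deg_G(v) w_v^2 - w^T A(H) w >= d |x|^2, so by the variational
   characterisation of eigenvalues L(G) has k eigenvalues >= d, i.e. lambda_k >= d. *)

lemma cscalar_prod_real [simp]: "(v :: real vec) \<bullet>c w = v \<bullet> w"
  by (simp add: scalar_prod_def conjugate_vec_def)

lemma self_scalar_prod_nonneg: "0 \<le> (v :: real vec) \<bullet> v"
  unfolding scalar_prod_def by (intro sum_nonneg) simp

lemma self_scalar_prod_pos:
  fixes v :: "real vec"
  assumes "v \<in> carrier_vec n" and "v \<noteq> 0\<^sub>v n"
  shows "0 < v \<bullet> v"
  using conjugate_square_greater_0_vec[OF assms(1)] assms(2) by simp

definition normalize_vec :: "real vec \<Rightarrow> real vec" where
  "normalize_vec v = (1 / sqrt (v \<bullet> v)) \<cdot>\<^sub>v v"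

lemma normalize_vec_carrier [simp]: "v \<in> carrier_vec n \<Longrightarrow> normalize_vec v \<in> carrier_vec n"
  unfolding normalize_vec_def by simp

lemma normalize_vec_scalar_prod:
  assumes "u \<in> carrier_vec n" and "v \<in> carrier_vec n"
  shows "normalize_vec u \<bullet> normalize_vec v = (u \<bullet> v) / (sqrt (u \<bullet> u) * sqrt (v \<bullet> v))"
  using assms unfolding normalize_vec_def by simp

lemma normalize_vec_unit:
  assumes v: "v \<in> carrier_vec n" and v0: "v \<noteq> 0\<^sub>v n"
  shows "normalize_vec v \<bullet> normalize_vec v = 1"
  using normalize_vec_scalar_prod[OF v v] self_scalar_prod_pos[OF v v0] by simp

lemma nonzero_vec_index:
  assumes "v \<in> carrier_vec n" and "v \<noteq> 0\<^sub>v n"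
  obtains i where "i < n" and "v $ i \<noteq> 0"
  using assms by (metis eq_vecI carrier_vecD index_zero_vec)

text \<open>Every complex square matrix of positive size has an eigenvector (fundamental theorem
  of algebra applied to the characteristic polynomial).\<close>
lemma complex_eigenvector_exists:
  fixes A :: "complex mat"
  assumes A: "A \<in> carrier_mat n n" and n: "0 < n"
  obtains z w where "w \<in> carrier_vec n" "w \<noteq> 0\<^sub>v n" "A *\<^sub>v w = z \<cdot>\<^sub>v w"
proof -
  have "Polynomial.degree (char_poly A) = n" using degree_monic_char_poly[OF A] by auto
  hence "\<not> constant (poly (char_poly A))" using n by (simp add: constant_degree)
  then obtain z where "poly (char_poly A) z = 0" using fundamental_theorem_of_algebra by blast
  hence "eigenvalue A z" using eigenvalue_root_char_poly[OF A] by auto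
  then obtain w where "eigenvector A w z" unfolding eigenvalue_def by auto
  thus ?thesis using that A unfolding eigenvector_def by auto
qed

lemma of_real_mat_mult_vec_index:
  fixes A :: "real mat" and w :: "complex vec"
  assumes "A \<in> carrier_mat n n" and "w \<in> carrier_vec n" and "i < n"
  shows "(map_mat complex_of_real A *\<^sub>v w) $ i = (\<Sum>j<n. of_real (A $$ (i,j)) * w $ j)"
  using assms by (auto simp: scalar_prod_def lessThan_atLeast0 intro!: sum.cong)

text \<open>The eigenvalues of a real symmetric matrix are real: for an eigenvector w the
  Hermitian form w* A w equals both z |w|^2 and its own conjugate.\<close>
lemma real_symmetric_eigenvalue_real:
  fixes A :: "real mat"
  assumes A: "A \<in> carrier_mat n n" and sym: "transpose_mat A = A"
    and w: "w \<in> carrier_vec n" "w \<noteq> 0\<^sub>v n"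
    and ev: "map_mat complex_of_real A *\<^sub>v w = z \<cdot>\<^sub>v w"
  shows "Im z = 0"
proof -
  have symA: "A $$ (i,j) = A $$ (j,i)" if "i < n" "j < n" for i j
    using sym A that by (metis carrier_matD index_transpose_mat(1))
  have evi: "(\<Sum>j<n. of_real (A $$ (i,j)) * w $ j) = z * w $ i" if i: "i < n" for i
    using arg_cong[OF ev, of "\<lambda>v. v $ i"] of_real_mat_mult_vec_index[OF A w(1) i] w(1) i by simp
  define s where "s = (\<Sum>i<n. cnj (w $ i) * (\<Sum>j<n. of_real (A $$ (i,j)) * w $ j))"
  define N where "N = (\<Sum>i<n. cnj (w $ i) * w $ i)"
  have s_eq: "s = z * N" unfolding s_def N_def using evi
    by (simp add: sum_distrib_left mult.assoc mult.left_commute)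
  have "cnj s = (\<Sum>i<n. \<Sum>j<n. w $ i * of_real (A $$ (i,j)) * cnj (w $ j))"
    unfolding s_def by (simp add: sum_distrib_left mult.assoc)
  also have "\<dots> = (\<Sum>j<n. \<Sum>i<n. w $ i * of_real (A $$ (i,j)) * cnj (w $ j))"
    by (rule sum.swap)
  also have "\<dots> = s" unfolding s_def sum_distrib_left
    by (intro sum.cong refl, simp add: symA mult.commute mult.left_commute)
  finally have s_real: "cnj s = s" .
  obtain i0 where i0: "i0 < n" "w $ i0 \<noteq> 0" using nonzero_vec_index[OF w] .
  have "Re N = (\<Sum>i<n. (cmod (w $ i))^2)" unfolding N_def
    by (simp add: complex_mult_cnj cmod_def power2_eq_square)
  also have "\<dots> > 0" by (rule sum_pos2[of _ i0], insert i0, auto)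
  finally have "N \<noteq> 0" by auto
  moreover have "cnj N = N" unfolding N_def by (simp add: mult.commute)
  hence "cnj z * N = z * N" using s_real s_eq by (metis complex_cnj_mult)
  ultimately have "cnj z = z" by simp
  thus ?thesis by (metis Reals_cnj_iff complex_is_Real_iff)
qed

text \<open>Hence a real symmetric matrix has a real eigenvector: take the real or the imaginary
  part of a complex one.\<close>
lemma real_symmetric_eigenvector_exists:
  fixes A :: "real mat"
  assumes A: "A \<in> carrier_mat n n" and n: "0 < n" and sym: "transpose_mat A = A"
  obtains e u where "u \<in> carrier_vec n" "u \<noteq> 0\<^sub>v n" "A *\<^sub>v u = e \<cdot>\<^sub>v u"
proof -
  have Ac: "map_mat complex_of_real A \<in> carrier_mat n n" using A by simp
  obtain z w where w: "w \<in> carrier_vec n" "w \<noteq> 0\<^sub>v n" and ev: "map_mat complex_of_real A *\<^sub>v w = z \<cdot>\<^sub>v w"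
    using complex_eigenvector_exists[OF Ac n] by blast
  have imz: "Im z = 0" by (rule real_symmetric_eigenvalue_real[OF A sym w ev])
  define a where "a = map_vec Re w"
  define b where "b = map_vec Im w"
  have parts: "(A *\<^sub>v a) $ i = Re z * a $ i \<and> (A *\<^sub>v b) $ i = Re z * b $ i" if i: "i < n" for i
  proof -
    have "(\<Sum>j<n. of_real (A $$ (i,j)) * w $ j) = z * w $ i"
      using arg_cong[OF ev, of "\<lambda>v. v $ i"] of_real_mat_mult_vec_index[OF A w(1) i] w(1) i by simp
    from arg_cong[OF this, of Re] arg_cong[OF this, of Im]
    have "(\<Sum>j<n. A $$ (i,j) * Re (w $ j)) = Re z * Re (w $ i)"
      "(\<Sum>j<n. A $$ (i,j) * Im (w $ j)) = Re z * Im (w $ i)"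
      using imz by (simp_all add: Re_sum Im_sum)
    thus ?thesis using A w(1) i unfolding a_def b_def
      by (auto simp: scalar_prod_def lessThan_atLeast0 intro!: sum.cong)
  qed
  have "A *\<^sub>v a = Re z \<cdot>\<^sub>v a" "A *\<^sub>v b = Re z \<cdot>\<^sub>v b"
    using parts A w(1) by (auto intro!: eq_vecI simp: a_def b_def)
  moreover obtain i0 where i0: "i0 < n" "w $ i0 \<noteq> 0" using nonzero_vec_index[OF w] .
  hence "a \<noteq> 0\<^sub>v n \<or> b \<noteq> 0\<^sub>v n"
    using w(1) unfolding a_def b_def by (auto simp: complex_eq_iff dest!: arg_cong[of _ _ "\<lambda>v. v $ i0"])
  moreover have "a \<in> carrier_vec n" "b \<in> carrier_vec n" using w(1) unfolding a_def b_def by auto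
  ultimately show ?thesis using that by blast
qed

text \<open>A unit vector extends to an orthonormal basis: complete it to a basis, then apply
  Gram-Schmidt (which keeps the first vector) and normalise.\<close>
lemma orthonormal_basis_completion:
  fixes v :: "real vec"
  assumes v: "v \<in> carrier_vec n" and v1: "v \<bullet> v = 1"
  obtains us where "length us = n" "set us \<subseteq> carrier_vec n" "us ! 0 = v"
    "\<And>i j. i < n \<Longrightarrow> j < n \<Longrightarrow> us ! i \<bullet> us ! j = (if i = j then 1 else 0)"
proof -
  interpret cof_vec_space n "TYPE(real)" .
  have v0: "v \<noteq> 0\<^sub>v n" using v1 by auto
  have n0: "0 < n" using v v1 by (cases n) (auto simp: scalar_prod_def)
  define b where "b = basis_completion v"
  from basis_completion[OF v v0, folded b_def]
  have b: "distinct b" "\<not> lin_dep (set b)" "set b \<subseteq> carrier_vec n" "length b = n" by auto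
  have b_hd: "b = v # tl b" unfolding b_def basis_completion_def Let_def by simp
  define ws where "ws = gram_schmidt n b"
  from gram_schmidt_result[OF b(3,1,2) refl, folded ws_def]
  have ws: "set ws \<subseteq> carrier_vec n" "corthogonal ws" "length ws = n" by (auto simp: b(4))
  have ws_c: "ws ! i \<in> carrier_vec n" if "i < n" for i using ws that by (auto simp: nth_mem subset_iff)
  have ws_orth: "ws ! i \<bullet> ws ! j = 0 \<longleftrightarrow> i \<noteq> j" if "i < n" "j < n" for i j
    using corthogonalD[OF ws(2)] ws(3) that by simp
  have ws0: "ws ! 0 = v"
    using gram_schmidt_hd[OF v, of "tl b"] b_hd ws(3) n0 unfolding ws_def
    by (metis hd_conv_nth list.size(3) neq0_conv)
  define us where "us = map normalize_vec ws"
  have us_orth: "us ! i \<bullet> us ! j = (if i = j then 1 else 0)" if i: "i < n" and j: "j < n" for i j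
  proof (cases "i = j")
    case True
    have "ws ! i \<noteq> 0\<^sub>v n" using ws_orth[OF i i] ws_c[OF i] by auto
    thus ?thesis using normalize_vec_unit[OF ws_c[OF i]] True i ws(3) unfolding us_def by simp
  next
    case False
    thus ?thesis using normalize_vec_scalar_prod[OF ws_c[OF i] ws_c[OF j]] ws_orth[OF i j] i j ws(3)
      unfolding us_def by simp
  qed
  have "us ! 0 = v" using ws0 n0 ws(3) v1 unfolding us_def normalize_vec_def by simp
  moreover have "set us \<subseteq> carrier_vec n" using ws(1) unfolding us_def by auto
  moreover have "length us = n" using ws(3) unfolding us_def by simp
  ultimately show ?thesis using that us_orth by blast
qed

lemma orthogonal_completion:
  fixes v :: "real vec"
  assumes v: "v \<in> carrier_vec n" and v1: "v \<bullet> v = 1"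
  obtains W where "W \<in> carrier_mat n n" "transpose_mat W * W = 1\<^sub>m n"
    "W * transpose_mat W = 1\<^sub>m n" "col W 0 = v"
proof -
  obtain us where us: "length us = n" "set us \<subseteq> carrier_vec n" "us ! 0 = v"
    and orth: "\<And>i j. i < n \<Longrightarrow> j < n \<Longrightarrow> us ! i \<bullet> us ! j = (if i = j then 1 else 0)"
    using orthonormal_basis_completion[OF v v1] by blast
  define W where "W = mat_of_cols n us"
  have W: "W \<in> carrier_mat n n" unfolding W_def using us(1) mat_of_cols_carrier(1)[of n us] by simp
  have W_col: "col W i = us ! i" if "i < n" for i
    unfolding W_def using us that by (simp add: col_mat_of_cols nth_mem subset_iff)
  have WW: "transpose_mat W * W = 1\<^sub>m n"
    by (rule eq_matI, insert W W_col orth, auto)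
  have "W * transpose_mat W = 1\<^sub>m n"
    by (rule mat_mult_left_right_inverse[OF _ W WW], insert W, auto)
  moreover have "0 < n" using v v1 by (cases n) (auto simp: scalar_prod_def)
  hence "col W 0 = v" using W_col us(3) by simp
  ultimately show ?thesis using that W WW by blast
qed

lemma congruence_entry:
  fixes A W :: "'a :: comm_ring_1 mat"
  assumes A: "A \<in> carrier_mat n n" and W: "W \<in> carrier_mat n k" and i: "i < k" and j: "j < k"
  shows "(transpose_mat W * A * W) $$ (i,j) = col W i \<bullet> (A *\<^sub>v col W j)"
proof -
  have "(transpose_mat W * A * W) $$ (i,j) = (transpose_mat W * (A * W)) $$ (i,j)"
    using A W by (subst assoc_mult_mat[of _ k n _ n _ k], auto)
  also have "\<dots> = col W i \<bullet> col (A * W) j" using A W i j by simp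
  also have "col (A * W) j = A *\<^sub>v col W j" using A W j by (intro eq_vecI, auto)
  finally show ?thesis .
qed

lemma congruence_symmetric:
  fixes A W :: "'a :: comm_ring_1 mat"
  assumes A: "A \<in> carrier_mat n n" and sym: "transpose_mat A = A" and W: "W \<in> carrier_mat n k"
  shows "transpose_mat (transpose_mat W * A * W) = transpose_mat W * A * W"
proof -
  have AW: "A * W \<in> carrier_mat n k" using A W by simp
  have "transpose_mat (transpose_mat W * A * W) = transpose_mat (transpose_mat W * (A * W))"
    using A W by (subst assoc_mult_mat[of _ k n _ n _ k], auto)
  also have "\<dots> = transpose_mat (A * W) * W"
    using transpose_mult[of "transpose_mat W" k n "A * W" k] W AW by simp
  also have "transpose_mat (A * W) = transpose_mat W * A"
    using transpose_mult[OF A W] sym by simp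
  finally show ?thesis .
qed

lemma orthogonal_similar:
  fixes A W :: "'a :: comm_ring_1 mat"
  assumes A: "A \<in> carrier_mat n n" and W: "W \<in> carrier_mat n n"
    and WW: "transpose_mat W * W = 1\<^sub>m n" and WW': "W * transpose_mat W = 1\<^sub>m n"
  shows "similar_mat_wit A (transpose_mat W * A * W) W (transpose_mat W)"
proof (rule similar_mat_witI[OF WW' WW _ A _ W])
  have "W * (transpose_mat W * A * W) * transpose_mat W = (W * transpose_mat W) * A * (W * transpose_mat W)"
    using A W by (simp add: assoc_mult_mat[of _ n n _ n _ n])
  thus "A = W * (transpose_mat W * A * W) * transpose_mat W" using A WW' by simp
qed (use A W in auto)

text \<open>Deflation step of the spectral theorem: conjugating a real symmetric matrix by an
  orthogonal matrix whose first column is a unit eigenvector splits off a 1x1 block.\<close>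
lemma symmetric_deflation:
  fixes A :: "real mat"
  assumes A: "A \<in> carrier_mat (Suc n) (Suc n)" and sym: "transpose_mat A = A"
  obtains W e A' where "W \<in> carrier_mat (Suc n) (Suc n)" "transpose_mat W * W = 1\<^sub>m (Suc n)"
    "W * transpose_mat W = 1\<^sub>m (Suc n)" "A' \<in> carrier_mat n n" "transpose_mat A' = A'"
    "transpose_mat W * A * W = four_block_mat (mat 1 1 (\<lambda>_. e)) (0\<^sub>m 1 n) (0\<^sub>m n 1) A'"
proof -
  obtain e u where u: "u \<in> carrier_vec (Suc n)" "u \<noteq> 0\<^sub>v (Suc n)" and Au: "A *\<^sub>v u = e \<cdot>\<^sub>v u"
    using real_symmetric_eigenvector_exists[OF A zero_less_Suc sym] by blast
  define v where "v = normalize_vec u"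
  have v: "v \<in> carrier_vec (Suc n)" unfolding v_def using u by simp
  have Av: "A *\<^sub>v v = e \<cdot>\<^sub>v v" unfolding v_def normalize_vec_def using A u Au
    by (simp add: mult_mat_vec smult_smult_assoc mult.commute)
  obtain W where W: "W \<in> carrier_mat (Suc n) (Suc n)" and WW: "transpose_mat W * W = 1\<^sub>m (Suc n)"
    and WW': "W * transpose_mat W = 1\<^sub>m (Suc n)" and W0: "col W 0 = v"
    using orthogonal_completion[OF v normalize_vec_unit[OF u, folded v_def]] by blast
  define B where "B = transpose_mat W * A * W"
  have B: "B \<in> carrier_mat (Suc n) (Suc n)" unfolding B_def using A W by auto
  have symB: "transpose_mat B = B" unfolding B_def by (rule congruence_symmetric[OF A sym W])
  have B_col0: "B $$ (i,0) = (if i = 0 then e else 0)" if i: "i < Suc n" for i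
  proof -
    have "B $$ (i,0) = col W i \<bullet> (A *\<^sub>v col W 0)"
      unfolding B_def by (rule congruence_entry[OF A W i], simp)
    also have "\<dots> = e * (col W i \<bullet> col W 0)" unfolding W0 Av using v W i by simp
    also have "col W i \<bullet> col W 0 = (transpose_mat W * W) $$ (i,0)" using W i by simp
    finally show ?thesis unfolding WW using i by simp
  qed
  define A' where "A' = mat n n (\<lambda>(i,j). B $$ (Suc i, Suc j))"
  have A': "A' \<in> carrier_mat n n" unfolding A'_def by simp
  have B_sym: "B $$ (j,i) = B $$ (i,j)" if "i < Suc n" "j < Suc n" for i j
    using arg_cong[OF symB, of "\<lambda>M. M $$ (i,j)"] B that by simp
  have "transpose_mat A' = A'"
    using B_sym by (intro eq_matI) (auto simp: A'_def)
  moreover have "B = four_block_mat (mat 1 1 (\<lambda>_. e)) (0\<^sub>m 1 n) (0\<^sub>m n 1) A'"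
    using B B_col0 B_sym by (intro eq_matI) (auto simp: A'_def split: nat.split)
  ultimately show ?thesis using that W WW WW' A' unfolding B_def by blast
qed

lemma orthogonal_similar_trans:
  fixes A :: "'a :: comm_ring_1 mat"
  assumes "similar_mat_wit A B W (transpose_mat W)" and "similar_mat_wit B D P (transpose_mat P)"
    and "W \<in> carrier_mat n n" and "P \<in> carrier_mat n n"
  shows "similar_mat_wit A D (W * P) (transpose_mat (W * P))"
  using similar_mat_wit_trans[OF assms(1,2)] assms(3,4) by (simp add: transpose_mult)

lemma orthogonal_diagonalization_block:
  fixes A' :: "real mat"
  assumes A': "A' \<in> carrier_mat n n"
    and sim': "similar_mat_wit A' D' U' (transpose_mat U')" and diag': "diagonal_mat D'"
  obtains P D where "similar_mat_wit (four_block_mat (mat 1 1 (\<lambda>_. e)) (0\<^sub>m 1 n) (0\<^sub>m n 1) A')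
      D P (transpose_mat P)" "P \<in> carrier_mat (Suc n) (Suc n)" "diagonal_mat D"
proof -
  note U' = similar_mat_witD2[OF A' sim']
  define e1 :: "real mat" where "e1 = mat 1 1 (\<lambda>_. e)"
  define D where "D = four_block_mat e1 (0\<^sub>m 1 n) (0\<^sub>m n 1) D'"
  define P where "P = four_block_mat (1\<^sub>m 1) (0\<^sub>m 1 n) (0\<^sub>m n 1) U'"
  have P: "P \<in> carrier_mat (Suc n) (Suc n)" unfolding P_def using U' by auto
  have P_transpose: "transpose_mat P = four_block_mat (1\<^sub>m 1) (0\<^sub>m 1 n) (0\<^sub>m n 1) (transpose_mat U')"
    unfolding P_def using U' by (subst transpose_four_block_mat, auto)
  have "similar_mat_wit (four_block_mat e1 (0\<^sub>m 1 n) (0\<^sub>m n 1) A') D P (transpose_mat P)"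
    unfolding P_transpose unfolding P_def D_def
    by (rule similar_mat_wit_four_block[OF similar_mat_wit_refl sim'], insert U' A', auto simp: e1_def)
  moreover have "diagonal_mat D"
    using diag' U' unfolding D_def diagonal_mat_def by (auto simp: e1_def split: nat.split)
  ultimately show ?thesis using that P unfolding e1_def by blast
qed

text \<open>Spectral theorem: a real symmetric matrix is orthogonally similar to a diagonal one.
  Induction on the dimension, splitting off one eigenvector at a time.\<close>
theorem real_symmetric_spectral:
  fixes A :: "real mat"
  assumes "A \<in> carrier_mat n n" and "transpose_mat A = A"
  obtains U D where "similar_mat_wit A D U (transpose_mat U)" and "diagonal_mat D"
proof -
  have "\<exists>U D. similar_mat_wit A D U (transpose_mat U) \<and> diagonal_mat D"
    using assms
  proof (induction n arbitrary: A)
    case 0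
    hence "similar_mat_wit A A (1\<^sub>m 0) (transpose_mat (1\<^sub>m 0))"
      using similar_mat_wit_refl[of A 0] by simp
    moreover have "diagonal_mat A" using "0.prems" unfolding diagonal_mat_def by auto
    ultimately show ?case by blast
  next
    case (Suc n)
    obtain W e A' where W: "W \<in> carrier_mat (Suc n) (Suc n)" "transpose_mat W * W = 1\<^sub>m (Suc n)"
      "W * transpose_mat W = 1\<^sub>m (Suc n)" and A': "A' \<in> carrier_mat n n" "transpose_mat A' = A'"
      and block: "transpose_mat W * A * W = four_block_mat (mat 1 1 (\<lambda>_. e)) (0\<^sub>m 1 n) (0\<^sub>m n 1) A'"
      using symmetric_deflation[OF Suc.prems] by blast
    obtain U' D' where "similar_mat_wit A' D' U' (transpose_mat U')" "diagonal_mat D'"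
      using Suc.IH[OF A'] by blast
    then obtain P D where sim_block: "similar_mat_wit (transpose_mat W * A * W) D P (transpose_mat P)"
      and P: "P \<in> carrier_mat (Suc n) (Suc n)" and diag: "diagonal_mat D"
      unfolding block using orthogonal_diagonalization_block[OF A'(1)] by metis
    have "similar_mat_wit A D (W * P) (transpose_mat (W * P))"
      by (rule orthogonal_similar_trans[OF orthogonal_similar[OF Suc.prems(1) W] sim_block W(1) P])
    thus ?case using diag by blast
  qed
  thus ?thesis using that by blast
qed

lemma proots_linear_factors: "proots (\<Prod>a\<leftarrow>xs. [:- a, 1:]) = mset (xs :: real list)"
proof (induction xs)
  case Nil thus ?case by simp
next
  case (Cons x xs)
  have "(\<Prod>a\<leftarrow>xs. [:- a, 1:]) \<noteq> (0 :: real poly)"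
    by (auto simp: prod_list_zero_iff)
  hence "proots ([:- x, 1:] * (\<Prod>a\<leftarrow>xs. [:- a, 1:])) = proots [:- x, 1:] + mset xs"
    using proots_mult Cons.IH by (metis pCons_eq_0_iff zero_neq_one)
  thus ?case using proots_linear_factor[of "-x"] by simp
qed

lemma eigenvalues_mset_diagonalization:
  fixes A :: "real mat"
  assumes A: "A \<in> carrier_mat n n" and sim: "similar_mat_wit A D U (transpose_mat U)"
    and diag: "diagonal_mat D"
  shows "eigenvalues_mset A = mset (diag_mat D)"
proof -
  have D: "D \<in> carrier_mat n n" using similar_mat_witD2[OF A sim] by auto
  have "char_poly A = char_poly D"
    by (rule char_poly_similar, unfold similar_mat_def, insert sim, blast)
  also have "\<dots> = (\<Prod>a\<leftarrow>diag_mat D. [:- a, 1:])"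
    by (rule char_poly_upper_triangular[OF D], insert diag D,
        auto simp: diagonal_mat_def upper_triangular_def)
  finally show ?thesis unfolding eigenvalues_mset_def by (simp add: proots_linear_factors)
qed

lemma count_diag_mat:
  assumes "D \<in> carrier_mat n n"
  shows "size (filter_mset P (mset (diag_mat D))) = card {i. i < n \<and> P (D $$ (i,i))}"
proof -
  have "size (filter_mset P (mset (diag_mat D))) = length (filter P (diag_mat D))"
    by (metis mset_filter size_mset)
  also have "\<dots> = card {i. i < n \<and> P (D $$ (i,i))}"
    unfolding length_filter_conv_card diag_mat_def using assms
    by (intro arg_cong[where f=card] Collect_cong) auto
  finally show ?thesis .
qed

lemma eigenvalues_mset_uminus:
  fixes M :: "real mat"
  assumes M: "M \<in> carrier_mat n n" and sym: "transpose_mat M = M"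
  shows "eigenvalues_mset (- M) = image_mset uminus (eigenvalues_mset M)"
proof -
  obtain U D where sim: "similar_mat_wit M D U (transpose_mat U)" and diag: "diagonal_mat D"
    using real_symmetric_spectral[OF M sym] by blast
  note w = similar_mat_witD2[OF M sim]
  have "similar_mat_wit (- M) (- D) U (transpose_mat U)"
    using w by (intro similar_mat_witI) auto
  moreover have "diagonal_mat (- D)" using diag by (auto simp: diagonal_mat_def)
  moreover have "diag_mat (- D) = map uminus (diag_mat D)"
    using w by (auto simp: diag_mat_def)
  ultimately show ?thesis
    using eigenvalues_mset_diagonalization[OF M sim diag]
      eigenvalues_mset_diagonalization[of "- M" n "- D" U] M by simp
qed

lemma congruence_form:
  fixes M X :: "'a :: comm_ring_1 mat"
  assumes M: "M \<in> carrier_mat n n" and X: "X \<in> carrier_mat n k"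
    and a: "a \<in> carrier_vec k" and b: "b \<in> carrier_vec k"
  shows "(X *\<^sub>v a) \<bullet> (M *\<^sub>v (X *\<^sub>v b)) = a \<bullet> ((transpose_mat X * M * X) *\<^sub>v b)"
proof -
  define v where "v = (transpose_mat X * M * X) *\<^sub>v b"
  have v: "v \<in> carrier_vec k" unfolding v_def using M X b by (intro mult_mat_vec_carrier) auto
  have MXb: "M *\<^sub>v (X *\<^sub>v b) \<in> carrier_vec n" using M X b by simp
  have XtM: "transpose_mat X * M \<in> carrier_mat k n" using M X by simp
  have "v = (transpose_mat X * M) *\<^sub>v (X *\<^sub>v b)"
    unfolding v_def by (rule assoc_mult_mat_vec[OF XtM X b])
  also have "\<dots> = transpose_mat X *\<^sub>v (M *\<^sub>v (X *\<^sub>v b))"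
    using M X b by (intro assoc_mult_mat_vec) auto
  finally have v_eq: "transpose_mat X *\<^sub>v (M *\<^sub>v (X *\<^sub>v b)) = v" by simp
  have "(X *\<^sub>v a) \<bullet> (M *\<^sub>v (X *\<^sub>v b)) = (transpose_mat X *\<^sub>v (M *\<^sub>v (X *\<^sub>v b))) \<bullet> a"
    using transpose_vec_mult_scalar[OF X a MXb] comm_scalar_prod[OF MXb, of "X *\<^sub>v a"] X a by simp
  also have "\<dots> = a \<bullet> v" unfolding v_eq by (rule comm_scalar_prod[OF v a])
  finally show ?thesis unfolding v_def .
qed

lemma isometry_scalar_prod:
  fixes X :: "'a :: comm_ring_1 mat"
  assumes X: "X \<in> carrier_mat n k" and XX: "transpose_mat X * X = 1\<^sub>m k"
    and a: "a \<in> carrier_vec k" and b: "b \<in> carrier_vec k"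
  shows "(X *\<^sub>v a) \<bullet> (X *\<^sub>v b) = a \<bullet> b"
  using congruence_form[OF one_carrier_mat X a b] X XX b by simp

text \<open>X has trivial kernel, i.e. its columns span a subspace of dimension dim_col X.\<close>
definition mat_injective :: "'a :: semiring_0 mat \<Rightarrow> bool" where
  "mat_injective X \<longleftrightarrow>
     (\<forall>z \<in> carrier_vec (dim_col X). X *\<^sub>v z = 0\<^sub>v (dim_row X) \<longrightarrow> z = 0\<^sub>v (dim_col X))"

lemma isometry_injective:
  fixes X :: "real mat"
  assumes X: "X \<in> carrier_mat n k" and XX: "transpose_mat X * X = 1\<^sub>m k"
  shows "mat_injective X"
  unfolding mat_injective_def
proof (intro ballI impI)
  fix z :: "real vec" assume z: "z \<in> carrier_vec (dim_col X)" and Xz: "X *\<^sub>v z = 0\<^sub>v (dim_row X)"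
  have "z \<bullet> z = 0" using isometry_scalar_prod[OF X XX, of z z] z Xz X by simp
  thus "z = 0\<^sub>v (dim_col X)"
    using self_scalar_prod_pos[of z "dim_col X"] z by fastforce
qed

lemma mat_injective_mult:
  assumes X: "X \<in> carrier_mat n k" and Y: "Y \<in> carrier_mat k l"
    and "mat_injective X" and "mat_injective Y"
  shows "mat_injective (X * Y)"
  using assms unfolding mat_injective_def by (auto simp: assoc_mult_mat_vec[OF X Y])

lemma diagonalization_form:
  fixes M :: "real mat"
  assumes M: "M \<in> carrier_mat n n" and sim: "similar_mat_wit M D U (transpose_mat U)"
    and y: "y \<in> carrier_vec n"
  shows "(U *\<^sub>v y) \<bullet> (M *\<^sub>v (U *\<^sub>v y)) = y \<bullet> (D *\<^sub>v y)"
    and "(U *\<^sub>v y) \<bullet> (U *\<^sub>v y) = y \<bullet> y"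
proof -
  note w = similar_mat_witD2[OF M sim]
  have U: "U \<in> carrier_mat n n" and D: "D \<in> carrier_mat n n" using w by auto
  have "transpose_mat U * (U * D) = (transpose_mat U * U) * D"
    using U D by (intro assoc_mult_mat[symmetric]) auto
  hence UUD: "transpose_mat U * (U * D) = D" using w D by simp
  have "transpose_mat U * M * U = D" using w D UUD by (simp add: assoc_mult_mat[of _ n n _ n _ n])
  thus "(U *\<^sub>v y) \<bullet> (M *\<^sub>v (U *\<^sub>v y)) = y \<bullet> (D *\<^sub>v y)" using congruence_form[OF M U y y] by simp
  show "(U *\<^sub>v y) \<bullet> (U *\<^sub>v y) = y \<bullet> y" using isometry_scalar_prod[OF U _ y y] w by simp
qed

lemma diagonal_form:
  fixes D :: "real mat"
  assumes D: "D \<in> carrier_mat n n" and diag: "diagonal_mat D" and y: "y \<in> carrier_vec n"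
  shows "y \<bullet> (D *\<^sub>v y) = (\<Sum>i<n. D $$ (i,i) * (y $ i)^2)"
proof -
  have "(D *\<^sub>v y) $ i = D $$ (i,i) * y $ i" if i: "i < n" for i
  proof -
    have "(D *\<^sub>v y) $ i = (\<Sum>j<n. D $$ (i,j) * y $ j)"
      using D y i by (simp add: scalar_prod_def lessThan_atLeast0)
    also have "\<dots> = (\<Sum>j<n. if j = i then D $$ (i,i) * y $ i else 0)"
      using D diag i by (intro sum.cong) (auto simp: diagonal_mat_def)
    finally show ?thesis using i by simp
  qed
  thus ?thesis using D y
    by (auto simp: scalar_prod_def lessThan_atLeast0 power2_eq_square intro!: sum.cong)
qed

lemma diagonal_form_le:
  fixes D :: "real mat"
  assumes D: "D \<in> carrier_mat n n" and diag: "diagonal_mat D" and y: "y \<in> carrier_vec n"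
    and supp: "\<And>i. i < n \<Longrightarrow> c < D $$ (i,i) \<Longrightarrow> y $ i = 0"
  shows "y \<bullet> (D *\<^sub>v y) \<le> c * (y \<bullet> y)"
proof -
  have "y \<bullet> (D *\<^sub>v y) = (\<Sum>i<n. D $$ (i,i) * (y $ i)^2)" by (rule diagonal_form[OF D diag y])
  also have "\<dots> \<le> (\<Sum>i<n. c * (y $ i)^2)"
  proof (rule sum_mono)
    fix i assume "i \<in> {..<n}"
    thus "D $$ (i,i) * (y $ i)^2 \<le> c * (y $ i)^2"
      using supp[of i] by (cases "c < D $$ (i,i)") (auto intro: mult_right_mono)
  qed
  also have "\<dots> = c * (y \<bullet> y)"
    using y by (simp add: scalar_prod_def lessThan_atLeast0 sum_distrib_left power2_eq_square)
  finally show ?thesis .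
qed

lemma diagonal_form_less:
  fixes D :: "real mat"
  assumes D: "D \<in> carrier_mat n n" and diag: "diagonal_mat D"
    and y: "y \<in> carrier_vec n" "y \<noteq> 0\<^sub>v n"
    and supp: "\<And>i. i < n \<Longrightarrow> c \<le> D $$ (i,i) \<Longrightarrow> y $ i = 0"
  shows "y \<bullet> (D *\<^sub>v y) < c * (y \<bullet> y)"
proof -
  obtain i0 where i0: "i0 < n" "y $ i0 \<noteq> 0" using nonzero_vec_index[OF y] .
  have "y \<bullet> (D *\<^sub>v y) = (\<Sum>i<n. D $$ (i,i) * (y $ i)^2)" by (rule diagonal_form[OF D diag y(1)])
  also have "\<dots> < (\<Sum>i<n. c * (y $ i)^2)"
  proof (rule sum_strict_mono_ex1)
    show "\<forall>i\<in>{..<n}. D $$ (i,i) * (y $ i)^2 \<le> c * (y $ i)^2"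
    proof
      fix i assume "i \<in> {..<n}"
      thus "D $$ (i,i) * (y $ i)^2 \<le> c * (y $ i)^2"
        using supp[of i] by (cases "c \<le> D $$ (i,i)") (auto intro: mult_right_mono)
    qed
    have "D $$ (i0,i0) < c" using supp i0 by force
    thus "\<exists>i\<in>{..<n}. D $$ (i,i) * (y $ i)^2 < c * (y $ i)^2" using i0 by force
  qed simp
  also have "\<dots> = c * (y \<bullet> y)"
    using y by (simp add: scalar_prod_def lessThan_atLeast0 sum_distrib_left power2_eq_square)
  finally show ?thesis .
qed

lemma diagonal_form_ge:
  fixes D :: "real mat"
  assumes D: "D \<in> carrier_mat n n" and diag: "diagonal_mat D" and y: "y \<in> carrier_vec n"
    and bound: "\<And>i. i < n \<Longrightarrow> c \<le> D $$ (i,i)"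
  shows "c * (y \<bullet> y) \<le> y \<bullet> (D *\<^sub>v y)"
proof -
  have "c * (y \<bullet> y) = (\<Sum>i<n. c * (y $ i)^2)"
    using y by (simp add: scalar_prod_def lessThan_atLeast0 sum_distrib_left power2_eq_square)
  also have "\<dots> \<le> (\<Sum>i<n. D $$ (i,i) * (y $ i)^2)"
    using bound by (intro sum_mono mult_right_mono) auto
  also have "\<dots> = y \<bullet> (D *\<^sub>v y)" by (rule diagonal_form[symmetric, OF D diag y])
  finally show ?thesis .
qed

lemma wide_mat_kernel:
  fixes R :: "'a :: field mat"
  assumes R: "R \<in> carrier_mat r c" and rc: "r < c"
  obtains z where "z \<in> carrier_vec c" "z \<noteq> 0\<^sub>v c" "R *\<^sub>v z = 0\<^sub>v r"
proof -
  define B where "B = mat c c (\<lambda>(i,j). if i < r then R $$ (i,j) else 0)"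
  have B: "B \<in> carrier_mat c c" unfolding B_def by simp
  have "B = mat\<^sub>r c c (\<lambda>i. if i = c - 1 then 0\<^sub>v c else row B i)"
    by (rule eq_matI, insert rc, auto simp: B_def)
  hence "det B = 0" using det_row_0[of "c - 1" c "\<lambda>i. row B i"] rc B by auto
  then obtain z where z: "z \<in> carrier_vec c" "z \<noteq> 0\<^sub>v c" "B *\<^sub>v z = 0\<^sub>v c"
    using det_0_iff_vec_prod_zero_field[OF B] by auto
  have "(R *\<^sub>v z) $ i = (B *\<^sub>v z) $ i" if "i < r" for i
    using that rc R z(1) by (simp add: B_def row_def scalar_prod_def)
  hence "R *\<^sub>v z = 0\<^sub>v r" using z(3) R rc by (intro eq_vecI) auto
  thus ?thesis using that z by blast
qed

text \<open>The selection matrix of a list ts of distinct indices below n: its columns are the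
  unit vectors e_(ts!a). Conjugating by it extracts the principal submatrix on ts.\<close>
definition sel_mat :: "nat \<Rightarrow> nat list \<Rightarrow> 'a :: zero_neq_one mat" where
  "sel_mat n ts = mat n (length ts) (\<lambda>(i,a). if i = ts ! a then 1 else 0)"

lemma sel_mat_carrier [simp]: "sel_mat n ts \<in> carrier_mat n (length ts)"
  unfolding sel_mat_def by simp

lemma sel_mat_dim [simp]:
  "dim_row (sel_mat n ts) = n" "dim_col (sel_mat n ts) = length ts"
  unfolding sel_mat_def by simp_all

lemma col_sel_mat:
  assumes "set ts \<subseteq> {..<n}" and "a < length ts"
  shows "col (sel_mat n ts) a = unit_vec n (ts ! a)"
  using assms unfolding sel_mat_def by (intro eq_vecI) (auto simp: unit_vec_def)

lemma sel_mat_principal: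
  fixes B :: "'a :: comm_ring_1 mat"
  assumes B: "B \<in> carrier_mat n n" and ts: "set ts \<subseteq> {..<n}"
    and a: "a < length ts" and b: "b < length ts"
  shows "(transpose_mat (sel_mat n ts) * B * sel_mat n ts) $$ (a,b) = B $$ (ts ! a, ts ! b)"
proof -
  have ta: "ts ! a < n" and tb: "ts ! b < n" using ts a b by (auto dest!: nth_mem)
  have "(transpose_mat (sel_mat n ts) * B * sel_mat n ts) $$ (a,b)
      = col (sel_mat n ts) a \<bullet> (B *\<^sub>v col (sel_mat n ts) b)"
    by (rule congruence_entry[OF B sel_mat_carrier a b])
  also have "\<dots> = unit_vec n (ts ! a) \<bullet> (B *\<^sub>v unit_vec n (ts ! b))"
    unfolding col_sel_mat[OF ts a] col_sel_mat[OF ts b] ..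
  also have "\<dots> = B $$ (ts ! a, ts ! b)" using B ta tb by simp
  finally show ?thesis .
qed

lemma sel_mat_orthonormal:
  assumes ts: "set ts \<subseteq> {..<n}" and dist: "distinct ts"
  shows "transpose_mat (sel_mat n ts) * (sel_mat n ts :: 'a :: comm_ring_1 mat) = 1\<^sub>m (length ts)"
proof (rule eq_matI)
  fix a b assume "a < dim_row (1\<^sub>m (length ts) :: 'a mat)" "b < dim_col (1\<^sub>m (length ts) :: 'a mat)"
  hence a: "a < length ts" and b: "b < length ts" by auto
  have "transpose_mat (sel_mat n ts) * 1\<^sub>m n = (transpose_mat (sel_mat n ts) :: 'a mat)"
    by (rule right_mult_one_mat[of _ "length ts"]) simp
  hence "(transpose_mat (sel_mat n ts) * sel_mat n ts) $$ (a,b) = (1\<^sub>m n :: 'a mat) $$ (ts ! a, ts ! b)"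
    using sel_mat_principal[OF one_carrier_mat ts a b] by simp
  moreover have "ts ! a < n" "ts ! b < n" using ts a b by (auto dest!: nth_mem)
  moreover have "ts ! a = ts ! b \<longleftrightarrow> a = b" using dist a b by (simp add: nth_eq_iff_index_eq)
  ultimately show "(transpose_mat (sel_mat n ts) * sel_mat n ts) $$ (a,b) = (1\<^sub>m (length ts) :: 'a mat) $$ (a,b)"
    using a b by simp
qed auto

lemma sel_mat_transpose_mult_vec:
  fixes y :: "'a :: comm_ring_1 vec"
  assumes ts: "set ts \<subseteq> {..<n}" and y: "y \<in> carrier_vec n" and a: "a < length ts"
  shows "(transpose_mat (sel_mat n ts) *\<^sub>v y) $ a = y $ (ts ! a)"
proof -
  have "(transpose_mat (sel_mat n ts) *\<^sub>v y) $ a = col (sel_mat n ts) a \<bullet> y"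
    using a by simp
  also have "\<dots> = y $ (ts ! a)"
    unfolding col_sel_mat[OF ts a] using y ts a by (auto dest!: nth_mem)
  finally show ?thesis .
qed

lemma sel_mat_mult_vec_outside:
  fixes z :: "'a :: comm_ring_1 vec"
  assumes "z \<in> carrier_vec (length ts)" and "i < n" and "i \<notin> set ts"
  shows "(sel_mat n ts *\<^sub>v z) $ i = 0"
  using assms unfolding sel_mat_def by (auto simp: scalar_prod_def intro!: sum.neutral)

lemma sel_mat_subspace:
  fixes X :: "real mat"
  assumes ts: "set ts \<subseteq> {..<n}" "distinct ts"
    and X: "X \<in> carrier_mat (length ts) k" and inj: "mat_injective X"
  shows "sel_mat n ts * X \<in> carrier_mat n k" "mat_injective (sel_mat n ts * X)"
    and "\<And>B z. B \<in> carrier_mat n n \<Longrightarrow> z \<in> carrier_vec k \<Longrightarrow>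
      (sel_mat n ts * X *\<^sub>v z) \<bullet> (B *\<^sub>v (sel_mat n ts * X *\<^sub>v z))
      = (X *\<^sub>v z) \<bullet> ((transpose_mat (sel_mat n ts) * B * sel_mat n ts) *\<^sub>v (X *\<^sub>v z))"
    and "\<And>z. z \<in> carrier_vec k \<Longrightarrow>
      (sel_mat n ts * X *\<^sub>v z) \<bullet> (sel_mat n ts * X *\<^sub>v z) = (X *\<^sub>v z) \<bullet> (X *\<^sub>v z)"
proof -
  let ?S = "sel_mat n ts :: real mat"
  have S: "?S \<in> carrier_mat n (length ts)" by simp
  have SS: "transpose_mat ?S * ?S = 1\<^sub>m (length ts)" by (rule sel_mat_orthonormal[OF ts])
  show "?S * X \<in> carrier_mat n k" by (rule mult_carrier_mat[OF S X])
  show "mat_injective (?S * X)" by (rule mat_injective_mult[OF S X isometry_injective[OF S SS] inj])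
  fix z :: "real vec" assume z: "z \<in> carrier_vec k"
  have w: "X *\<^sub>v z \<in> carrier_vec (length ts)" using X z by simp
  have SXz: "?S * X *\<^sub>v z = ?S *\<^sub>v (X *\<^sub>v z)" by (rule assoc_mult_mat_vec[OF S X z])
  show "(?S * X *\<^sub>v z) \<bullet> (?S * X *\<^sub>v z) = (X *\<^sub>v z) \<bullet> (X *\<^sub>v z)"
    unfolding SXz by (rule isometry_scalar_prod[OF S SS w w])
  fix B :: "real mat" assume B: "B \<in> carrier_mat n n"
  show "(?S * X *\<^sub>v z) \<bullet> (B *\<^sub>v (?S * X *\<^sub>v z))
      = (X *\<^sub>v z) \<bullet> ((transpose_mat ?S * B * ?S) *\<^sub>v (X *\<^sub>v z))"
    unfolding SXz by (rule congruence_form[OF B S w w])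
qed

lemma injective_mat_avoids_coordinates:
  fixes Y :: "real mat"
  assumes Y: "Y \<in> carrier_mat n k" and inj: "mat_injective Y"
    and T: "T \<subseteq> {..<n}" and card_T: "card T < k"
  obtains z where "z \<in> carrier_vec k" "Y *\<^sub>v z \<noteq> 0\<^sub>v n" "\<And>i. i \<in> T \<Longrightarrow> (Y *\<^sub>v z) $ i = 0"
proof -
  define ts where "ts = sorted_list_of_set T"
  have ts: "set ts = T" "length ts = card T"
    unfolding ts_def using finite_subset[OF T] by auto
  have ts_sub: "set ts \<subseteq> {..<n}" using ts(1) T by simp
  define S :: "real mat" where "S = sel_mat n ts"
  have St: "transpose_mat S \<in> carrier_mat (length ts) n" unfolding S_def by simp
  obtain z where z: "z \<in> carrier_vec k" "z \<noteq> 0\<^sub>v k"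
    and Sz: "(transpose_mat S * Y) *\<^sub>v z = 0\<^sub>v (length ts)"
    using wide_mat_kernel[of "transpose_mat S * Y" "length ts" k] St Y card_T ts(2) by auto
  have Yz: "Y *\<^sub>v z \<in> carrier_vec n" using Y z by simp
  have "(Y *\<^sub>v z) $ i = 0" if "i \<in> T" for i
  proof -
    have "i \<in> set ts" using that ts(1) by simp
    then obtain a where a: "a < length ts" "ts ! a = i" by (auto simp: in_set_conv_nth)
    have "(Y *\<^sub>v z) $ i = (transpose_mat S *\<^sub>v (Y *\<^sub>v z)) $ a"
      using sel_mat_transpose_mult_vec[OF ts_sub Yz a(1)] a(2) unfolding S_def by simp
    also have "\<dots> = 0" using Sz a(1) assoc_mult_mat_vec[OF St Y z(1)] by simp
    finally show ?thesis .
  qed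
  moreover have "Y *\<^sub>v z \<noteq> 0\<^sub>v n" using inj z Y unfolding mat_injective_def by auto
  ultimately show ?thesis using that z(1) by blast
qed

text \<open>Variational lower bound (one half of Courant-Fischer): if the quadratic form of a
  symmetric M is at least c times the squared norm on a k-dimensional subspace (the column
  space of an injective X), then M has at least k eigenvalues that are at least c.
  Otherwise, in eigenvector coordinates, that subspace would contain a nonzero vector
  supported on the eigenvalues below c.\<close>
lemma eigenvalue_count_ge:
  fixes M X :: "real mat"
  assumes M: "M \<in> carrier_mat n n" and sym: "transpose_mat M = M"
    and X: "X \<in> carrier_mat n k" and inj: "mat_injective X"
    and form: "\<And>z. z \<in> carrier_vec k \<Longrightarrow>
      c * ((X *\<^sub>v z) \<bullet> (X *\<^sub>v z)) \<le> (X *\<^sub>v z) \<bullet> (M *\<^sub>v (X *\<^sub>v z))"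
  shows "k \<le> size (filter_mset (\<lambda>x. c \<le> x) (eigenvalues_mset M))"
proof (rule ccontr)
  obtain U D where sim: "similar_mat_wit M D U (transpose_mat U)" and diag: "diagonal_mat D"
    using real_symmetric_spectral[OF M sym] by blast
  note w = similar_mat_witD2[OF M sim]
  have U: "U \<in> carrier_mat n n" and D: "D \<in> carrier_mat n n" and Ut: "transpose_mat U \<in> carrier_mat n n"
    using w by auto
  define T where "T = {i. i < n \<and> c \<le> D $$ (i,i)}"
  assume "\<not> ?thesis"
  hence "card T < k"
    unfolding eigenvalues_mset_diagonalization[OF M sim diag] count_diag_mat[OF D] T_def by simp
  moreover have "mat_injective (transpose_mat U * X)"
    using mat_injective_mult[OF Ut X isometry_injective[OF Ut] inj] w by simp
  ultimately obtain z where z: "z \<in> carrier_vec k" and y0: "transpose_mat U * X *\<^sub>v z \<noteq> 0\<^sub>v n"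
    and y_T: "\<And>i. i \<in> T \<Longrightarrow> (transpose_mat U * X *\<^sub>v z) $ i = 0"
    using injective_mat_avoids_coordinates[of "transpose_mat U * X" n k T] U X
    unfolding T_def by auto
  define y where "y = transpose_mat U * X *\<^sub>v z"
  have y: "y \<in> carrier_vec n" unfolding y_def using U X z by simp
  have "U *\<^sub>v y = (U * transpose_mat U) *\<^sub>v (X *\<^sub>v z)"
    unfolding y_def using U X z by simp
  hence Uy: "U *\<^sub>v y = X *\<^sub>v z" using w X z by simp
  have "y \<bullet> (D *\<^sub>v y) < c * (y \<bullet> y)"
    by (rule diagonal_form_less[OF D diag y y0[folded y_def]]) (use y_T in \<open>auto simp: y_def T_def\<close>)
  moreover have "c * (y \<bullet> y) \<le> y \<bullet> (D *\<^sub>v y)"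
    using form[OF z] diagonalization_form[OF M sim y] unfolding Uy by simp
  ultimately show False by simp
qed

text \<open>The mirror statement for an upper bound, obtained by applying the previous lemma to -M.\<close>
lemma eigenvalue_count_le:
  fixes M X :: "real mat"
  assumes M: "M \<in> carrier_mat n n" and sym: "transpose_mat M = M"
    and X: "X \<in> carrier_mat n k" and inj: "mat_injective X"
    and form: "\<And>z. z \<in> carrier_vec k \<Longrightarrow>
      (X *\<^sub>v z) \<bullet> (M *\<^sub>v (X *\<^sub>v z)) \<le> c * ((X *\<^sub>v z) \<bullet> (X *\<^sub>v z))"
  shows "k \<le> size (filter_mset (\<lambda>x. x \<le> c) (eigenvalues_mset M))"
proof -
  have "k \<le> size (filter_mset (\<lambda>x. - c \<le> x) (eigenvalues_mset (- M)))"
  proof (rule eigenvalue_count_ge[OF _ _ X inj])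
    show "- M \<in> carrier_mat n n" "transpose_mat (- M) = - M" using M sym by (auto simp: transpose_uminus)
    fix z :: "real vec" assume z: "z \<in> carrier_vec k"
    thus "- c * ((X *\<^sub>v z) \<bullet> (X *\<^sub>v z)) \<le> (X *\<^sub>v z) \<bullet> (- M *\<^sub>v (X *\<^sub>v z))"
      using form[OF z] M X by simp
  qed
  thus ?thesis unfolding eigenvalues_mset_uminus[OF M sym] filter_mset_image_mset by simp
qed

text \<open>Conversely, k eigenvalues at most c give a k-dimensional subspace, spanned by
  orthonormal eigenvectors, on which the quadratic form is at most c times the squared norm.\<close>
lemma subspace_of_eigenvalue_count_le:
  fixes M :: "real mat"
  assumes M: "M \<in> carrier_mat n n" and sym: "transpose_mat M = M"
    and k: "k \<le> size (filter_mset (\<lambda>x. x \<le> c) (eigenvalues_mset M))"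
  obtains X where "X \<in> carrier_mat n k" "transpose_mat X * X = 1\<^sub>m k"
    "\<And>z. z \<in> carrier_vec k \<Longrightarrow> (X *\<^sub>v z) \<bullet> (M *\<^sub>v (X *\<^sub>v z)) \<le> c * ((X *\<^sub>v z) \<bullet> (X *\<^sub>v z))"
proof -
  obtain U D where sim: "similar_mat_wit M D U (transpose_mat U)" and diag: "diagonal_mat D"
    using real_symmetric_spectral[OF M sym] by blast
  note w = similar_mat_witD2[OF M sim]
  have U: "U \<in> carrier_mat n n" and D: "D \<in> carrier_mat n n" using w by auto
  define T where "T = {i. i < n \<and> D $$ (i,i) \<le> c}"
  have count: "size (filter_mset (\<lambda>x. x \<le> c) (eigenvalues_mset M)) = card T"
    unfolding eigenvalues_mset_diagonalization[OF M sim diag] count_diag_mat[OF D] T_def ..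
  define ts where "ts = take k (sorted_list_of_set T)"
  have ts: "set ts \<subseteq> T" "length ts = k" "distinct ts"
    unfolding ts_def using k count by (auto simp: T_def dest: in_set_takeD)
  have ts_sub: "set ts \<subseteq> {..<n}" using ts(1) unfolding T_def by auto
  define S :: "real mat" where "S = sel_mat n ts"
  have S: "S \<in> carrier_mat n k" unfolding S_def using ts(2) by auto
  define X where "X = U * S"
  have X: "X \<in> carrier_mat n k" unfolding X_def using U S by simp
  have "transpose_mat X * X = transpose_mat S * (transpose_mat U * U) * S"
    unfolding X_def using U S by (simp add: transpose_mult assoc_mult_mat[of _ k n _ n _ k])
  hence XX: "transpose_mat X * X = 1\<^sub>m k"
    using w S sel_mat_orthonormal[OF ts_sub ts(3)] unfolding S_def ts(2) by simp
  have "(X *\<^sub>v z) \<bullet> (M *\<^sub>v (X *\<^sub>v z)) \<le> c * ((X *\<^sub>v z) \<bullet> (X *\<^sub>v z))" if z: "z \<in> carrier_vec k" for z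
  proof -
    define y where "y = S *\<^sub>v z"
    have y: "y \<in> carrier_vec n" unfolding y_def using S z by simp
    have Xz: "X *\<^sub>v z = U *\<^sub>v y" unfolding X_def y_def using U S z by simp
    have "y $ i = 0" if "i < n" "c < D $$ (i,i)" for i
    proof -
      have "i \<notin> set ts" using ts(1) that unfolding T_def by auto
      thus ?thesis using sel_mat_mult_vec_outside[of z ts i n] that z ts(2) unfolding y_def S_def by auto
    qed
    hence "y \<bullet> (D *\<^sub>v y) \<le> c * (y \<bullet> y)" by (rule diagonal_form_le[OF D diag y])
    thus ?thesis unfolding Xz diagonalization_form[OF M sim y] .
  qed
  thus ?thesis using that X XX by blast
qed

lemma adj_matrix_carrier [simp]: "adj_matrix n E \<in> carrier_mat n n"
  unfolding adj_matrix_def by simp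

lemma adj_matrix_dim [simp]: "dim_row (adj_matrix n E) = n" "dim_col (adj_matrix n E) = n"
  unfolding adj_matrix_def by simp_all

lemma laplacian_carrier [simp]: "laplacian n E \<in> carrier_mat n n"
  unfolding laplacian_def by (rule minus_carrier_mat) (simp add: adj_matrix_def)

lemma adj_matrix_symmetric:
  assumes "simple_graph n E"
  shows "transpose_mat (adj_matrix n E) = adj_matrix n E"
  using assms unfolding simple_graph_def adj_matrix_def by (intro eq_matI) auto

lemma laplacian_symmetric:
  assumes "simple_graph n E"
  shows "transpose_mat (laplacian n E) = laplacian n E"
  using assms unfolding simple_graph_def laplacian_def deg_matrix_def adj_matrix_def
  by (intro eq_matI) auto

definition induced_graph :: "(nat \<Rightarrow> nat \<Rightarrow> bool) \<Rightarrow> nat list \<Rightarrow> nat \<Rightarrow> nat \<Rightarrow> bool" where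
  "induced_graph E ts = (\<lambda>a b. E (ts ! a) (ts ! b))"

lemma simple_graph_induced:
  assumes "simple_graph m E" and "set ts \<subseteq> {..<m}" and "distinct ts"
  shows "simple_graph (length ts) (induced_graph E ts)"
  using assms unfolding simple_graph_def induced_graph_def by (auto dest!: nth_mem)

text \<open>The adjacency matrix of an induced subgraph is a principal submatrix, and the
  corresponding principal submatrix of the Laplacian is D_ts - A(G[ts]), where D_ts
  holds the degrees in the whole graph.\<close>
lemma adj_matrix_induced:
  assumes ts: "set ts \<subseteq> {..<m}"
  shows "transpose_mat (sel_mat m ts) * adj_matrix m E * sel_mat m ts
    = adj_matrix (length ts) (induced_graph E ts)"
proof (rule eq_matI)
  fix a b assume "a < dim_row (adj_matrix (length ts) (induced_graph E ts))"
    "b < dim_col (adj_matrix (length ts) (induced_graph E ts))"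
  hence a: "a < length ts" and b: "b < length ts" by auto
  have "ts ! a < m" "ts ! b < m" using ts a b by (auto dest!: nth_mem)
  thus "(transpose_mat (sel_mat m ts) * adj_matrix m E * sel_mat m ts) $$ (a,b)
      = adj_matrix (length ts) (induced_graph E ts) $$ (a,b)"
    using sel_mat_principal[OF adj_matrix_carrier ts a b] a b
    by (simp add: adj_matrix_def induced_graph_def)
qed auto

lemma laplacian_induced:
  assumes ts: "set ts \<subseteq> {..<m}" and dist: "distinct ts"
  shows "transpose_mat (sel_mat m ts) * laplacian m E * sel_mat m ts
    = mat (length ts) (length ts) (\<lambda>(a,b). if a = b then real (degree m E (ts ! a)) else 0)
      - adj_matrix (length ts) (induced_graph E ts)"
proof (rule eq_matI)
  fix a b assume "a < dim_row (mat (length ts) (length ts)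
      (\<lambda>(a,b). if a = b then real (degree m E (ts ! a)) else 0) - adj_matrix (length ts) (induced_graph E ts))"
    "b < dim_col (mat (length ts) (length ts)
      (\<lambda>(a,b). if a = b then real (degree m E (ts ! a)) else 0) - adj_matrix (length ts) (induced_graph E ts))"
  hence a: "a < length ts" and b: "b < length ts" by auto
  have "ts ! a < m" "ts ! b < m" using ts a b by (auto dest!: nth_mem)
  moreover have "ts ! a = ts ! b \<longleftrightarrow> a = b" using dist a b by (simp add: nth_eq_iff_index_eq)
  ultimately show "(transpose_mat (sel_mat m ts) * laplacian m E * sel_mat m ts) $$ (a,b)
      = (mat (length ts) (length ts) (\<lambda>(a,b). if a = b then real (degree m E (ts ! a)) else 0)
         - adj_matrix (length ts) (induced_graph E ts)) $$ (a,b)"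
    using sel_mat_principal[OF laplacian_carrier ts a b] a b
    by (simp add: laplacian_def deg_matrix_def adj_matrix_def induced_graph_def)
qed auto

lemma nonpos_eigs_induced_mono:
  assumes sg: "simple_graph m E" and ts: "set ts \<subseteq> {..<m}" "distinct ts"
    and k: "k \<le> num_nonpos_eigs (adj_matrix (length ts) (induced_graph E ts))"
  shows "k \<le> num_nonpos_eigs (adj_matrix m E)"
proof -
  define A' where "A' = adj_matrix (length ts) (induced_graph E ts)"
  obtain X' where X': "X' \<in> carrier_mat (length ts) k" "transpose_mat X' * X' = 1\<^sub>m k"
    and form': "\<And>z. z \<in> carrier_vec k \<Longrightarrow> (X' *\<^sub>v z) \<bullet> (A' *\<^sub>v (X' *\<^sub>v z)) \<le> 0 * ((X' *\<^sub>v z) \<bullet> (X' *\<^sub>v z))"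
    using subspace_of_eigenvalue_count_le[of A' "length ts" k 0]
      adj_matrix_symmetric[OF simple_graph_induced[OF sg ts]] k
    unfolding A'_def num_nonpos_eigs_def by auto
  note X = sel_mat_subspace[OF ts X'(1) isometry_injective[OF X']]
  show ?thesis unfolding num_nonpos_eigs_def
  proof (rule eigenvalue_count_le[OF adj_matrix_carrier adj_matrix_symmetric[OF sg] X(1,2)])
    fix z :: "real vec" assume z: "z \<in> carrier_vec k"
    show "(sel_mat m ts * X' *\<^sub>v z) \<bullet> (adj_matrix m E *\<^sub>v (sel_mat m ts * X' *\<^sub>v z))
        \<le> 0 * ((sel_mat m ts * X' *\<^sub>v z) \<bullet> (sel_mat m ts * X' *\<^sub>v z))"
      using form'[OF z] X(3)[OF adj_matrix_carrier z] unfolding adj_matrix_induced[OF ts(1)] A'_def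
      by simp
  qed
qed

lemma sum_zero_subspace:
  obtains C :: "real mat" where "C \<in> carrier_mat (Suc k) k" "mat_injective C"
    "\<And>z. z \<in> carrier_vec k \<Longrightarrow> (\<Sum>a<Suc k. (C *\<^sub>v z) $ a) = 0"
proof -
  define C :: "real mat" where "C = mat (Suc k) k (\<lambda>(a,j). if a = j then 1 else if a = k then -1 else 0)"
  have C: "C \<in> carrier_mat (Suc k) k" unfolding C_def by simp
  have C_entry: "(C *\<^sub>v z) $ a = (\<Sum>j<k. C $$ (a,j) * z $ j)" if "z \<in> carrier_vec k" "a < Suc k" for z a
    using that C by (simp add: scalar_prod_def lessThan_atLeast0)
  have C_top: "(C *\<^sub>v z) $ a = z $ a" if z: "z \<in> carrier_vec k" and a: "a < k" for z a
  proof -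
    have "(C *\<^sub>v z) $ a = (\<Sum>j<k. if j = a then z $ j else 0)"
      unfolding C_entry[OF z less_SucI[OF a]] using a by (intro sum.cong) (auto simp: C_def)
    thus ?thesis using a by simp
  qed
  have C_sum: "(\<Sum>a<Suc k. (C *\<^sub>v z) $ a) = 0" if z: "z \<in> carrier_vec k" for z
  proof -
    have "(C *\<^sub>v z) $ k = (\<Sum>j<k. - z $ j)"
      unfolding C_entry[OF z lessI] by (intro sum.cong) (auto simp: C_def)
    thus ?thesis using C_top[OF z] by (simp add: sum_negf)
  qed
  have "mat_injective C"
    unfolding mat_injective_def
  proof (intro ballI impI)
    fix z :: "real vec" assume z: "z \<in> carrier_vec (dim_col C)" and Cz: "C *\<^sub>v z = 0\<^sub>v (dim_row C)"
    show "z = 0\<^sub>v (dim_col C)"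
    proof (rule eq_vecI)
      fix a assume "a < dim_vec (0\<^sub>v (dim_col C))"
      hence a: "a < k" using C by simp
      have "z $ a = (C *\<^sub>v z) $ a" using C_top[of z a] C z a by simp
      thus "z $ a = 0\<^sub>v (dim_col C) $ a" using Cz C a by simp
    qed (use z in simp)
  qed
  thus ?thesis using that C C_sum by blast
qed

lemma homogeneous_adj_sum_zero:
  assumes sg: "simple_graph n E"
    and hom: "\<And>a b. a < n \<Longrightarrow> b < n \<Longrightarrow> a \<noteq> b \<Longrightarrow> E a b \<longleftrightarrow> p"
    and w: "w \<in> carrier_vec n" and sum0: "(\<Sum>b<n. w $ b) = 0"
  shows "adj_matrix n E *\<^sub>v w = (if p then -1 else 0) \<cdot>\<^sub>v w"
proof (rule eq_vecI)
  fix a assume "a < dim_vec ((if p then -1 else 0) \<cdot>\<^sub>v w)"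
  hence a: "a < n" using w by simp
  have entry: "adj_matrix n E $$ (a,b) = (if b \<noteq> a \<and> p then 1 else 0)" if "b < n" for b
    using a that sg hom[of a b] unfolding adj_matrix_def simple_graph_def by (cases "a = b") auto
  have "(adj_matrix n E *\<^sub>v w) $ a = (\<Sum>b<n. adj_matrix n E $$ (a,b) * w $ b)"
    using a w by (simp add: scalar_prod_def lessThan_atLeast0)
  also have "\<dots> = (if p then (\<Sum>b<n. w $ b - (if b = a then w $ b else 0)) else 0)"
    using entry by (auto intro!: sum.cong)
  also have "\<dots> = (if p then - w $ a else 0)"
    using a sum0 by (simp add: sum_subtractf)
  finally show "(adj_matrix n E *\<^sub>v w) $ a = ((if p then -1 else 0) \<cdot>\<^sub>v w) $ a"
    using a w by simp
qed (use w in simp)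

lemma homogeneous_graph_nonpos:
  assumes sg: "simple_graph (Suc k) E"
    and hom: "\<And>a b. a < Suc k \<Longrightarrow> b < Suc k \<Longrightarrow> a \<noteq> b \<Longrightarrow> E a b \<longleftrightarrow> p"
  shows "k \<le> num_nonpos_eigs (adj_matrix (Suc k) E)"
proof -
  obtain C :: "real mat" where C: "C \<in> carrier_mat (Suc k) k" "mat_injective C"
    and sum0: "\<And>z. z \<in> carrier_vec k \<Longrightarrow> (\<Sum>a<Suc k. (C *\<^sub>v z) $ a) = 0"
    using sum_zero_subspace[of k] by blast
  show ?thesis unfolding num_nonpos_eigs_def
  proof (rule eigenvalue_count_le[OF adj_matrix_carrier adj_matrix_symmetric[OF sg] C])
    fix z :: "real vec" assume z: "z \<in> carrier_vec k"
    have w: "C *\<^sub>v z \<in> carrier_vec (Suc k)" using C z by simp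
    have "adj_matrix (Suc k) E *\<^sub>v (C *\<^sub>v z) = (if p then -1 else 0) \<cdot>\<^sub>v (C *\<^sub>v z)"
      by (rule homogeneous_adj_sum_zero[OF sg hom w sum0[OF z]])
    thus "(C *\<^sub>v z) \<bullet> (adj_matrix (Suc k) E *\<^sub>v (C *\<^sub>v z)) \<le> 0 * ((C *\<^sub>v z) \<bullet> (C *\<^sub>v z))"
      using w self_scalar_prod_nonneg[of "C *\<^sub>v z"] by auto
  qed
qed

lemma ramsey_homogeneous_set:
  obtains r where "\<And>m E. r \<le> m \<Longrightarrow> simple_graph m E \<Longrightarrow>
    \<exists>R p. R \<subseteq> {..<m} \<and> card R = q \<and> (\<forall>u\<in>R. \<forall>v\<in>R. u \<noteq> v \<longrightarrow> (E u v \<longleftrightarrow> p))"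
proof -
  obtain r where r: "\<forall>(V :: nat set) EE. finite V \<and> r \<le> card V \<longrightarrow>
      (\<exists>R \<subseteq> V. card R = q \<and> clique R EE \<or> card R = q \<and> indep R EE)"
    using ramsey2[of q q] by blast
  have "\<exists>R p. R \<subseteq> {..<m} \<and> card R = q \<and> (\<forall>u\<in>R. \<forall>v\<in>R. u \<noteq> v \<longrightarrow> (E u v \<longleftrightarrow> p))"
    if rm: "r \<le> m" and sg: "simple_graph m E" for m E
  proof -
    define EE where "EE = {{u, v} | u v. E u v}"
    have edge: "{u, v} \<in> EE \<longleftrightarrow> E u v" if "u < m" "v < m" for u v
      using sg that unfolding EE_def simple_graph_def by (auto simp: doubleton_eq_iff)
    obtain R where R: "R \<subseteq> {..<m}" "card R = q" and ci: "clique R EE \<or> indep R EE"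
      using r[rule_format, of "{..<m}" EE] rm by auto
    have "\<forall>u\<in>R. \<forall>v\<in>R. u \<noteq> v \<longrightarrow> (E u v \<longleftrightarrow> clique R EE)"
      using ci R(1) edge unfolding clique_def indep_def by (metis lessThan_iff subsetD)
    thus ?thesis using R by blast
  qed
  thus ?thesis using that by blast
qed

text \<open>Hence NPO(k) is well defined: a homogeneous set of k+1 vertices induces a complete or
  empty graph, which already has k nonpositive adjacency eigenvalues.\<close>
lemma NPO_exists:
  "\<exists>N. \<forall>m E. N \<le> m \<longrightarrow> simple_graph m E \<longrightarrow> k \<le> num_nonpos_eigs (adj_matrix m E)"
proof -
  obtain r where r: "\<And>m E. r \<le> m \<Longrightarrow> simple_graph m E \<Longrightarrow>
      \<exists>R p. R \<subseteq> {..<m} \<and> card R = Suc k \<and> (\<forall>u\<in>R. \<forall>v\<in>R. u \<noteq> v \<longrightarrow> (E u v \<longleftrightarrow> p))"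
    using ramsey_homogeneous_set by blast
  have "k \<le> num_nonpos_eigs (adj_matrix m E)" if rm: "r \<le> m" and sg: "simple_graph m E" for m E
  proof -
    obtain R p where R: "R \<subseteq> {..<m}" "card R = Suc k"
      and hom: "\<forall>u\<in>R. \<forall>v\<in>R. u \<noteq> v \<longrightarrow> (E u v \<longleftrightarrow> p)"
      using r[OF rm sg] by blast
    define rs where "rs = sorted_list_of_set R"
    have rs: "set rs = R" "length rs = Suc k" "distinct rs"
      unfolding rs_def using R finite_subset[OF R(1)] by auto
    have rs_sub: "set rs \<subseteq> {..<m}" using rs(1) R(1) by simp
    have "simple_graph (Suc k) (induced_graph E rs)"
      using simple_graph_induced[OF sg rs_sub rs(3)] unfolding rs(2) .
    moreover have "induced_graph E rs a b \<longleftrightarrow> p" if "a < Suc k" "b < Suc k" "a \<noteq> b" for a b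
    proof -
      have "rs ! a \<in> R" "rs ! b \<in> R" "rs ! a \<noteq> rs ! b"
        using rs that by (auto simp: nth_eq_iff_index_eq)
      thus ?thesis using hom unfolding induced_graph_def by blast
    qed
    ultimately have "k \<le> num_nonpos_eigs (adj_matrix (length rs) (induced_graph E rs))"
      using homogeneous_graph_nonpos[of k "induced_graph E rs" p] rs(2) by simp
    thus ?thesis by (rule nonpos_eigs_induced_mono[OF sg rs_sub rs(3)])
  qed
  thus ?thesis by blast
qed

lemma NPO_spec:
  assumes "NPO k \<le> m" and "simple_graph m E"
  shows "k \<le> num_nonpos_eigs (adj_matrix m E)"
  using LeastI_ex[OF NPO_exists[of k]] assms unfolding NPO_def by blast

text \<open>The graph with no vertices has no eigenvalues, so NPO(k) is positive for k > 0.\<close>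
lemma num_nonpos_eigs_empty: "num_nonpos_eigs (adj_matrix 0 E) = 0"
proof -
  have "size (eigenvalues_mset (adj_matrix 0 E)) = 0"
    using size_proots_le[of "char_poly (adj_matrix 0 E)"]
      degree_monic_char_poly[OF adj_matrix_carrier, of 0 E]
    unfolding eigenvalues_mset_def by simp
  thus ?thesis unfolding num_nonpos_eigs_def by simp
qed

lemma NPO_pos:
  assumes "0 < k"
  shows "0 < NPO k"
proof (rule ccontr)
  assume "\<not> 0 < NPO k"
  moreover have "simple_graph 0 (\<lambda>_ _. False)" unfolding simple_graph_def by simp
  ultimately have "k \<le> num_nonpos_eigs (adj_matrix 0 (\<lambda>_ _. False))" by (intro NPO_spec) auto
  thus False using assms num_nonpos_eigs_empty by simp
qed

text \<open>On the subspace where the induced adjacency form is nonpositive, the Laplacian form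
  x^T (D - A) x of G is at least its degree part, hence at least d times the squared norm.\<close>
lemma laplacian_eigenvalues_ge_degree:
  assumes sg: "simple_graph m E" and ts: "set ts \<subseteq> {..<m}" "distinct ts"
    and deg: "\<And>v. v \<in> set ts \<Longrightarrow> d \<le> degree m E v"
    and k: "k \<le> num_nonpos_eigs (adj_matrix (length ts) (induced_graph E ts))"
  shows "k \<le> size (filter_mset (\<lambda>x. real d \<le> x) (eigenvalues_mset (laplacian m E)))"
proof -
  define N where "N = length ts"
  define A' where "A' = adj_matrix N (induced_graph E ts)"
  define Dd :: "real mat" where "Dd = mat N N (\<lambda>(a,b). if a = b then real (degree m E (ts ! a)) else 0)"
  have A': "A' \<in> carrier_mat N N" and Dd: "Dd \<in> carrier_mat N N" unfolding A'_def Dd_def by auto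
  obtain X' where X': "X' \<in> carrier_mat N k" "transpose_mat X' * X' = 1\<^sub>m k"
    and form': "\<And>z. z \<in> carrier_vec k \<Longrightarrow> (X' *\<^sub>v z) \<bullet> (A' *\<^sub>v (X' *\<^sub>v z)) \<le> 0 * ((X' *\<^sub>v z) \<bullet> (X' *\<^sub>v z))"
    using subspace_of_eigenvalue_count_le[of A' N k 0]
      adj_matrix_symmetric[OF simple_graph_induced[OF sg ts]] k
    unfolding A'_def N_def num_nonpos_eigs_def by auto
  note X = sel_mat_subspace[OF ts X'(1)[unfolded N_def] isometry_injective[OF X']]
  show ?thesis
  proof (rule eigenvalue_count_ge[OF laplacian_carrier laplacian_symmetric[OF sg] X(1,2)])
    fix z :: "real vec" assume z: "z \<in> carrier_vec k"
    define w where "w = X' *\<^sub>v z"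
    have w: "w \<in> carrier_vec N" unfolding w_def using X' z by simp
    have "(sel_mat m ts * X' *\<^sub>v z) \<bullet> (laplacian m E *\<^sub>v (sel_mat m ts * X' *\<^sub>v z)) = w \<bullet> ((Dd - A') *\<^sub>v w)"
      using X(3)[OF laplacian_carrier z] unfolding laplacian_induced[OF ts] w_def Dd_def A'_def N_def .
    also have "\<dots> = w \<bullet> (Dd *\<^sub>v w) - w \<bullet> (A' *\<^sub>v w)"
      using minus_mult_distrib_mat_vec[OF Dd A' w] scalar_prod_minus_distrib[OF w] Dd A' w by simp
    also have "\<dots> \<ge> real d * (w \<bullet> w)"
    proof -
      have "real d * (w \<bullet> w) \<le> w \<bullet> (Dd *\<^sub>v w)"
        using deg by (intro diagonal_form_ge[OF Dd _ w]) (auto simp: Dd_def N_def diagonal_mat_def)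
      moreover have "w \<bullet> (A' *\<^sub>v w) \<le> 0" using form'[OF z] unfolding w_def by simp
      ultimately show ?thesis by simp
    qed
    finally show "real d * ((sel_mat m ts * X' *\<^sub>v z) \<bullet> (sel_mat m ts * X' *\<^sub>v z))
        \<le> (sel_mat m ts * X' *\<^sub>v z) \<bullet> (laplacian m E *\<^sub>v (sel_mat m ts * X' *\<^sub>v z))"
      unfolding X(4)[OF z] w_def .
  qed
qed

lemma sorted_eigs_desc: "sorted (rev (eigs_desc A))"
  unfolding eigs_desc_def by simp

lemma eigs_desc_count:
  "length (filter P (eigs_desc A)) = size (filter_mset P (eigenvalues_mset A))"
  unfolding eigs_desc_def by (metis mset_filter mset_rev mset_sorted_list_of_multiset size_mset)

lemma sorted_desc_nth_ge:
  fixes ys :: "'a :: linorder list"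
  assumes s: "sorted (rev ys)" and k0: "0 < k" and k: "k \<le> length (filter (\<lambda>x. c \<le> x) ys)"
  shows "c \<le> ys ! (k - 1)"
proof (rule ccontr)
  assume "\<not> c \<le> ys ! (k - 1)"
  hence small: "ys ! j < c" if "k - 1 \<le> j" "j < length ys" for j
    using sorted_rev_nth_mono[OF s that] by simp
  have "{j. j < length ys \<and> c \<le> ys ! j} \<subseteq> {..<k - 1}"
    using small by (auto simp: not_less[symmetric])
  hence "length (filter (\<lambda>x. c \<le> x) ys) \<le> k - 1"
    unfolding length_filter_conv_card by (metis card_lessThan card_mono finite_lessThan)
  thus False using k k0 by simp
qed

lemma sorted_desc_count:
  fixes xs :: "'a :: linorder list"
  assumes N0: "0 < N" and N: "N \<le> length xs"
  shows "N \<le> card {i. i < length xs \<and> rev (sort xs) ! (N - 1) \<le> xs ! i}"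
proof -
  define ys where "ys = rev (sort xs)"
  define d where "d = ys ! (N - 1)"
  have len: "length ys = length xs" unfolding ys_def by simp
  have "{..<N} \<subseteq> {j. j < length ys \<and> d \<le> ys ! j}"
    using sorted_rev_nth_mono[of ys] N len unfolding d_def ys_def by auto
  hence "N \<le> card {j. j < length ys \<and> d \<le> ys ! j}"
    by (metis (no_types, lifting) card_lessThan card_mono finite_nat_set_iff_bounded mem_Collect_eq)
  also have "\<dots> = length (filter (\<lambda>x. d \<le> x) ys)" by (rule length_filter_conv_card[symmetric])
  also have "\<dots> = length (filter (\<lambda>x. d \<le> x) xs)"
    unfolding ys_def by (metis mset_filter mset_rev mset_sort size_mset)
  also have "\<dots> = card {i. i < length xs \<and> d \<le> xs ! i}" by (rule length_filter_conv_card)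
  finally show ?thesis unfolding d_def ys_def .
qed

lemma top_degree_vertices:
  assumes "0 < N" and "N \<le> m"
  obtains ts where "set ts \<subseteq> {..<m}" "distinct ts" "length ts = N"
    "\<And>v. v \<in> set ts \<Longrightarrow> degs_desc m E ! (N - 1) \<le> degree m E v"
proof -
  define xs where "xs = map (degree m E) [0..<m]"
  have "N \<le> card {i. i < length xs \<and> rev (sort xs) ! (N - 1) \<le> xs ! i}"
    using sorted_desc_count[of N xs] assms unfolding xs_def by simp
  also have "{i. i < length xs \<and> rev (sort xs) ! (N - 1) \<le> xs ! i}
      = {v. v < m \<and> degs_desc m E ! (N - 1) \<le> degree m E v}"
    unfolding xs_def degs_desc_def by auto
  finally obtain V where V: "V \<subseteq> {v. v < m \<and> degs_desc m E ! (N - 1) \<le> degree m E v}" "card V = N"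
    by (meson obtain_subset_with_card_n)
  have "finite V" using V(1) by (rule finite_subset) simp
  thus ?thesis using that[of "sorted_list_of_set V"] V by auto
qed

theorem mainTheorem13:
  fixes k m :: nat and E :: "nat \<Rightarrow> nat \<Rightarrow> bool"
  assumes "0 < k"
    and "simple_graph m E"
    and "NPO k \<le> m"
  shows "eigs_desc (laplacian m E) ! (k - 1) \<ge> real (degs_desc m E ! (NPO k - 1))"
proof -
  define N where "N = NPO k"
  define d where "d = degs_desc m E ! (N - 1)"
  obtain ts where ts: "set ts \<subseteq> {..<m}" "distinct ts" "length ts = N"
    and deg: "\<And>v. v \<in> set ts \<Longrightarrow> d \<le> degree m E v"
    using top_degree_vertices[OF NPO_pos[OF assms(1)] assms(3)] unfolding N_def d_def by blast
  have nonpos: "k \<le> num_nonpos_eigs (adj_matrix (length ts) (induced_graph E ts))"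
    using NPO_spec[of k] simple_graph_induced[OF assms(2) ts(1,2)] ts(3) unfolding N_def by simp
  have "k \<le> size (filter_mset (\<lambda>x. real d \<le> x) (eigenvalues_mset (laplacian m E)))"
    using laplacian_eigenvalues_ge_degree[OF assms(2) ts(1,2) deg nonpos] .
  hence "k \<le> length (filter (\<lambda>x. real d \<le> x) (eigs_desc (laplacian m E)))"
    unfolding eigs_desc_count .
  hence "real d \<le> eigs_desc (laplacian m E) ! (k - 1)"
    by (rule sorted_desc_nth_ge[OF sorted_eigs_desc assms(1)])
  thus ?thesis unfolding d_def N_def .
qed

end
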